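(* Let $\mathcal{A}$ be a finite abelian group with $|\mathcal{A}|\ge 3$. For integers $p_1\ge 1$ and $p_2\ge 0$, let $G_2(p_1,p_2)$ be the graph consisting of a triangle $v_2v_3v_4$, a vertex $v_1$ adjacent to $v_2$, $p_1$ pendant vertices adjacent to $v_1$, and $p_2$ pendant vertices adjacent to $v_2$. Then $G_2(p_1,p_2)$ is $\mathcal{A}$-vertex magic if and only if $p_2=0$ and $|\mathcal{A}|$ is even.
   Context: A map $\ell:V(G)\to\mathcal{A}\setminus\{0\}$ is an $\mathcal{A}$-vertex magic labeling if there is $\mu\in\mathcal{A}$ with $\sum_{u\in N(v)}\ell(u)=\mu$ for every vertex $v$; $G$ is $\mathcal{A}$-vertex magic if such a labeling exists. A pendant vertex is a vertex of degree $1$. *)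

theory Defs
  imports Main
begin

definition nbhd :: "'v set \<Rightarrow> ('v \<Rightarrow> 'v \<Rightarrow> bool) \<Rightarrow> 'v \<Rightarrow> 'v set" where
  "nbhd V E v = {u \<in> V. E v u}"

definition vertex_magic_labeling ::
  "'v set \<Rightarrow> ('v \<Rightarrow> 'v \<Rightarrow> bool) \<Rightarrow> ('v \<Rightarrow> 'a::ab_group_add) \<Rightarrow> bool" where
  "vertex_magic_labeling V E l \<longleftrightarrow>
     (\<forall>v\<in>V. l v \<noteq> 0) \<and> (\<exists>mu. \<forall>v\<in>V. (\<Sum>u\<in>nbhd V E v. l u) = mu)"

definition A_vertex_magic ::
  "'a::ab_group_add itself \<Rightarrow> 'v set \<Rightarrow> ('v \<Rightarrow> 'v \<Rightarrow> bool) \<Rightarrow> bool" where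
  "A_vertex_magic A V E \<longleftrightarrow> (\<exists>l :: 'v \<Rightarrow> 'a. vertex_magic_labeling V E l)"

text \<open>The graph G_2(p1,p2): vertices 1..4 are v1..v4; vertices 5..4+p1 are the pendants
at v1; vertices 5+p1..4+p1+p2 are the pendants at v2.\<close>

definition G2_V :: "nat \<Rightarrow> nat \<Rightarrow> nat set" where
  "G2_V p1 p2 = {1..4 + p1 + p2}"

definition G2_base :: "nat \<Rightarrow> nat \<Rightarrow> nat \<Rightarrow> nat \<Rightarrow> bool" where
  "G2_base p1 p2 u v \<longleftrightarrow>
     (u = 1 \<and> v = 2) \<or> (u = 2 \<and> v = 3) \<or> (u = 3 \<and> v = 4) \<or> (u = 2 \<and> v = 4) \<or>
     (u = 1 \<and> 5 \<le> v \<and> v \<le> 4 + p1) \<or>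
     (u = 2 \<and> 5 + p1 \<le> v \<and> v \<le> 4 + p1 + p2)"

definition G2_E :: "nat \<Rightarrow> nat \<Rightarrow> nat \<Rightarrow> nat \<Rightarrow> bool" where
  "G2_E p1 p2 u v \<longleftrightarrow> G2_base p1 p2 u v \<or> G2_base p1 p2 v u"

end

theory Submission
  imports Defs
begin

text \<open>
  In a magic labeling with constant \<mu>, a pendant at v1 forces l(v1) = \<mu>, and a pendant at v2
  would force l(v2) = \<mu>, hence l(v4) = 0. The triangle gives l(v2) + l(v3) = l(v2) + l(v4),
  so l(v3) = l(v4), and the sum around v2 becomes \<mu> + 2 l(v3) = \<mu>: the nonzero label l(v3)
  has order 2. A finite abelian group has an element of order 2 iff its order is even,
  since the involution a \<mapsto> -a fixes exactly 0 and the elements of order 2.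
  Conversely, given x of order 2 and \<mu> \<notin> {0, x}, label v1 by \<mu>, v2 by \<mu> - x, v3 and v4 by x,
  and the pendants at v1 by nonzero elements summing to x; the latter exist because |A| \<ge> 3.
\<close>

lemma card_even_if_fixpoint_free_involution:
  assumes "finite S" "\<forall>a\<in>S. f a \<in> S \<and> f (f a) = a \<and> f a \<noteq> a"
  shows "even (card S)"
  using assms
proof (induction "card S" arbitrary: S rule: less_induct)
  case less
  show ?case
  proof (cases "S = {}")
    case False
    then obtain a where a: "a \<in> S" by blast
    let ?S' = "S - {a, f a}"
    have fa: "f a \<in> S" "f a \<noteq> a" using a less.prems by auto
    have "card {a, f a} \<le> card S" using a fa less.prems(1) by (intro card_mono) auto
    then have card_S: "card S = card ?S' + 2"
      using a fa less.prems(1) by (simp add: card_Diff_subset)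
    have "\<forall>b\<in>?S'. f b \<in> ?S' \<and> f (f b) = b \<and> f b \<noteq> b"
      using less.prems(2) a by (metis DiffD1 DiffD2 DiffI insertCI insertE singletonD)
    then have "even (card ?S')" using less.hyps[of ?S'] card_S less.prems(1) by simp
    then show ?thesis using card_S by simp
  qed simp
qed

lemma even_card_iff_even_card_fixpoints:
  assumes "finite S" "\<forall>a\<in>S. f a \<in> S \<and> f (f a) = a"
  shows "even (card S) \<longleftrightarrow> even (card {a\<in>S. f a = a})"
proof -
  let ?F = "{a\<in>S. f a = a}"
  have "\<forall>a\<in>S - ?F. f a \<in> S - ?F \<and> f (f a) = a \<and> f a \<noteq> a"
    using assms(2) by (metis (mono_tags, lifting) Diff_iff mem_Collect_eq)
  then have "even (card (S - ?F))"
    using assms(1) by (blast intro: card_even_if_fixpoint_free_involution)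
  moreover have "card S = card (S - ?F) + card ?F"
    using assms(1) by (simp add: card_Diff_subset card_mono)
  ultimately show ?thesis by simp
qed

lemma even_card_UNIV_iff_ex_order_two:
  "even (card (UNIV :: 'a::{finite, ab_group_add} set)) \<longleftrightarrow> (\<exists>x::'a. x \<noteq> 0 \<and> x + x = 0)"
proof
  assume "even (card (UNIV :: 'a set))"
  then have "even (card {a::'a. - a = a})"
    using even_card_iff_even_card_fixpoints[of "UNIV :: 'a set" uminus] by simp
  then have "{a::'a. - a = a} \<noteq> {0}" by auto
  moreover have "0 \<in> {a::'a. - a = a}" by simp
  ultimately obtain x :: 'a where "- x = x" "x \<noteq> 0" by blast
  then show "\<exists>x::'a. x \<noteq> 0 \<and> x + x = 0" by (metis add.right_inverse)
next
  assume "\<exists>x::'a. x \<noteq> 0 \<and> x + x = 0"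
  then obtain x :: 'a where x: "x \<noteq> 0" "x + x = 0" by blast
  show "even (card (UNIV :: 'a set))"
    by (rule card_even_if_fixpoint_free_involution[where f="\<lambda>a. a + x"]) (auto simp: x add.assoc)
qed

lemma ex_ne_both:
  assumes "card (UNIV :: 'a set) \<ge> 3"
  shows "\<exists>z::'a. z \<noteq> a \<and> z \<noteq> b"
proof (rule ccontr)
  assume "\<not> ?thesis"
  then have "card (UNIV :: 'a set) \<le> card {a, b}"
    by (intro card_mono) auto
  also have "\<dots> \<le> 2" by (simp add: card_insert_le_m1)
  finally show False using assms by simp
qed

lemma ex_nonzero_summands:
  fixes y :: "'a::ab_group_add"
  assumes "card (UNIV :: 'a set) \<ge> 3" "finite S" "S \<noteq> {}" "y \<noteq> 0"
  shows "\<exists>g. (\<forall>i\<in>S. g i \<noteq> 0) \<and> sum g S = y"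
  using assms(2-4)
proof (induction S arbitrary: y rule: finite_ne_induct)
  case (singleton a)
  then show ?case by (intro exI[of _ "\<lambda>_. y"]) simp
next
  case (insert a F)
  obtain w :: 'a where w: "w \<noteq> 0" "w \<noteq> y" using ex_ne_both[OF assms(1)] by blast
  then obtain g where g: "\<forall>i\<in>F. g i \<noteq> 0" "sum g F = y - w"
    using insert.IH[of "y - w"] by auto
  have "sum (g(a := w)) F = sum g F"
    using insert.hyps(3) by (intro sum.cong) auto
  then have "sum (g(a := w)) F = y - w" using g(2) by simp
  then show ?case
    using g(1) w insert.hyps by (intro exI[of _ "g(a := w)"]) auto
qed

lemma G2_nbhd_v1: "nbhd (G2_V p1 p2) (G2_E p1 p2) 1 = insert 2 {5..4+p1}"
  by (auto simp: nbhd_def G2_V_def G2_E_def G2_base_def)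

lemma G2_nbhd_v2: "nbhd (G2_V p1 p2) (G2_E p1 p2) 2 = {1, 3, 4} \<union> {5+p1..4+p1+p2}"
  by (auto simp: nbhd_def G2_V_def G2_E_def G2_base_def)

lemma G2_nbhd_v3: "nbhd (G2_V p1 p2) (G2_E p1 p2) 3 = {2, 4}"
  by (auto simp: nbhd_def G2_V_def G2_E_def G2_base_def)

lemma G2_nbhd_v4: "nbhd (G2_V p1 p2) (G2_E p1 p2) 4 = {2, 3}"
  by (auto simp: nbhd_def G2_V_def G2_E_def G2_base_def)

lemma G2_nbhd_pendant_v1:
  "5 \<le> v \<Longrightarrow> v \<le> 4 + p1 \<Longrightarrow> nbhd (G2_V p1 p2) (G2_E p1 p2) v = {1}"
  by (auto simp: nbhd_def G2_V_def G2_E_def G2_base_def)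

lemma G2_nbhd_pendant_v2:
  "5 + p1 \<le> v \<Longrightarrow> v \<le> 4 + p1 + p2 \<Longrightarrow> nbhd (G2_V p1 p2) (G2_E p1 p2) v = {2}"
  by (auto simp: nbhd_def G2_V_def G2_E_def G2_base_def)

lemma G2_magic_labeling_necessary:
  assumes "p1 \<ge> 1" "vertex_magic_labeling (G2_V p1 p2) (G2_E p1 p2) l"
  shows "p2 = 0 \<and> l 3 \<noteq> 0 \<and> l 3 + l 3 = 0"
proof -
  obtain mu where nonzero: "\<forall>v\<in>G2_V p1 p2. l v \<noteq> 0"
    and magic: "\<And>v. v \<in> G2_V p1 p2 \<Longrightarrow> (\<Sum>u\<in>nbhd (G2_V p1 p2) (G2_E p1 p2) v. l u) = mu"
    using assms(2) unfolding vertex_magic_labeling_def by blast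
  have vertex: "v \<in> G2_V p1 p2" if "1 \<le> v" "v \<le> 4 + p1 + p2" for v
    using that by (simp add: G2_V_def)
  have l1: "l 1 = mu"
    using magic[OF vertex, of 5] G2_nbhd_pendant_v1[of 5 p1 p2] assms(1) by simp
  have l24: "l 2 + l 4 = mu" using magic[OF vertex, of 3] by (simp add: G2_nbhd_v3)
  have l23: "l 2 + l 3 = mu" using magic[OF vertex, of 4] by (simp add: G2_nbhd_v4)
  have l34: "l 3 \<noteq> 0" "l 4 \<noteq> 0" using nonzero vertex[of 3] vertex[of 4] by auto
  have p2: "p2 = 0"
  proof (rule ccontr)
    assume "p2 \<noteq> 0"
    then have "l 2 = mu"
      using magic[OF vertex, of "5 + p1"] G2_nbhd_pendant_v2[of p1 "5 + p1" p2] by simp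
    then show False using l24 l34 by simp
  qed
  have "l 1 + (l 3 + l 4) = mu"
    using magic[OF vertex, of 2] p2 by (simp add: G2_nbhd_v2 add.assoc)
  moreover have "l 3 = l 4" using l24 l23 by (metis add_left_cancel)
  ultimately show ?thesis using p2 l1 l34 by simp
qed

lemma G2_magic_labeling_exists:
  fixes x :: "'a::ab_group_add"
  assumes "p1 \<ge> 1" "card (UNIV :: 'a set) \<ge> 3" "x \<noteq> 0" "x + x = 0"
  shows "\<exists>l :: nat \<Rightarrow> 'a. vertex_magic_labeling (G2_V p1 0) (G2_E p1 0) l"
proof -
  obtain mu :: 'a where mu: "mu \<noteq> 0" "mu \<noteq> x" using ex_ne_both[OF assms(2)] by blast
  obtain g :: "nat \<Rightarrow> 'a" where g: "\<forall>i\<in>{5..4+p1}. g i \<noteq> 0" "sum g {5..4+p1} = x"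
    using ex_nonzero_summands[OF assms(2), of "{5..4+p1}" x] assms(1,3) by auto
  define l where "l v = (if v = 1 then mu else if v = 2 then mu - x
    else if v = 3 \<or> v = 4 then x else g v)" for v
  have "l v \<noteq> 0" if "v \<in> G2_V p1 0" for v
    using that mu g(1) assms(3) by (auto simp: l_def G2_V_def)
  moreover have "(\<Sum>u\<in>nbhd (G2_V p1 0) (G2_E p1 0) v. l u) = mu" if "v \<in> G2_V p1 0" for v
  proof -
    have "(\<Sum>u\<in>nbhd (G2_V p1 0) (G2_E p1 0) 1. l u) = l 2 + sum l {5..4+p1}"
      unfolding G2_nbhd_v1 by (rule sum.insert) auto
    also have "\<dots> = mu" using g(2) by (simp add: l_def)
    finally have "(\<Sum>u\<in>nbhd (G2_V p1 0) (G2_E p1 0) 1. l u) = mu" .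
    moreover have "v = 1 \<or> v = 2 \<or> v = 3 \<or> v = 4 \<or> (5 \<le> v \<and> v \<le> 4 + p1)"
      using that by (auto simp: G2_V_def)
    ultimately show ?thesis
      using assms(4)
      by (auto simp: G2_nbhd_v2 G2_nbhd_v3 G2_nbhd_v4 G2_nbhd_pendant_v1 l_def add.assoc)
  qed
  ultimately show ?thesis unfolding vertex_magic_labeling_def by blast
qed

theorem proposition3p2:
  fixes p1 p2 :: nat
    and A :: "'a::{finite, ab_group_add} itself"
  assumes "p1 \<ge> 1"
    and "card (UNIV :: 'a set) \<ge> 3"
  shows "A_vertex_magic A (G2_V p1 p2) (G2_E p1 p2) \<longleftrightarrow> p2 = 0 \<and> even (card (UNIV :: 'a set))"
proof
  assume "A_vertex_magic A (G2_V p1 p2) (G2_E p1 p2)"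
  then obtain l :: "nat \<Rightarrow> 'a" where "vertex_magic_labeling (G2_V p1 p2) (G2_E p1 p2) l"
    unfolding A_vertex_magic_def by blast
  then show "p2 = 0 \<and> even (card (UNIV :: 'a set))"
    using G2_magic_labeling_necessary assms(1) even_card_UNIV_iff_ex_order_two by blast
next
  assume "p2 = 0 \<and> even (card (UNIV :: 'a set))"
  then obtain x :: 'a where "p2 = 0" "x \<noteq> 0" "x + x = 0"
    using even_card_UNIV_iff_ex_order_two by blast
  then show "A_vertex_magic A (G2_V p1 p2) (G2_E p1 p2)"
    using G2_magic_labeling_exists[OF assms] unfolding A_vertex_magic_def by blast
qed

end
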